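(* Let $P^1,\dots,P^4\in\mathbb{R}^n$ be in general position, let $Q^0$ be the equidistant point from $P^1,\dots,P^4$ with barycentric coordinate $\boldsymbol\lambda^0$, and suppose $\lambda^0_1<0$, $\lambda^0_2,\lambda^0_3,\lambda^0_4\ge0$. Let $Q^1=\pi(Q^0|L(P^2,P^3,P^4))$ with barycentric coordinate $\boldsymbol\lambda^1$ about $P^1,\dots,P^4$, and suppose $\lambda^1_2<0$, $\lambda^1_3\ge0$, $\lambda^1_4\ge0$. Let $Q^2=\pi(Q^1|L(P^3,P^4))$. Then the center of the smallest enclosing circle of $P^1,\dots,P^4$ is $Q^\ast=Q^2$ and its radius is $d^\ast=d(P^3,Q^2)$.
   Context: $d$ is the Euclidean distance. Points are in general position if $P^2-P^1,\dots,P^m-P^1$ are linearly independent. $L(S^1,\dots,S^r)$ is the affine subspace spanned by the points; $\pi(Q'|L)$ is the orthogonal projection onto the affine subspace $L$. The barycentric coordinate of $Q\in L(P^1,\dots,P^m)$ is the unique $\boldsymbol\lambda$ with $\sum_i\lambda_i=1$, $Q=\sum_i\lambda_iP^i$. The equidistant point is the unique $Q^0\in L(P^1,\dots,P^m)$ with all $d(P^i,Q^0)$ equal. The smallest enclosing circle has center $Q^\ast$ attaining $\min_Q\max_i d(P^i,Q)$ and radius $d^\ast$ equal to this minimum. *)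

theory Defs
  imports "HOL-Analysis.Analysis"
begin

text \<open>Points P 1, ..., P m are in general position: P 2 - P 1, ..., P m - P 1 linearly independent
  (stated for the indexed family, so repeated vectors are not identified).\<close>
definition general_position :: "(nat \<Rightarrow> 'a::real_vector) \<Rightarrow> nat \<Rightarrow> bool" where
  "general_position P m \<longleftrightarrow>
     (\<forall>c::nat \<Rightarrow> real. (\<Sum>i=2..m. c i *\<^sub>R (P i - P 1)) = 0 \<longrightarrow> (\<forall>i\<in>{2..m}. c i = 0))"

definition is_barycentric :: "(nat \<Rightarrow> 'a::real_vector) \<Rightarrow> nat \<Rightarrow> 'a \<Rightarrow> (nat \<Rightarrow> real) \<Rightarrow> bool" where
  "is_barycentric P m Q lam \<longleftrightarrow> (\<Sum>i=1..m. lam i) = 1 \<and> Q = (\<Sum>i=1..m. lam i *\<^sub>R P i)"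

definition is_orth_proj :: "'a::real_inner \<Rightarrow> 'a set \<Rightarrow> 'a \<Rightarrow> bool" where
  "is_orth_proj y L x \<longleftrightarrow> y \<in> L \<and> (\<forall>u\<in>L. \<forall>v\<in>L. inner (x - y) (u - v) = 0)"

definition enc_radius :: "'a::metric_space set \<Rightarrow> 'a \<Rightarrow> real" where
  "enc_radius S Q = Max ((\<lambda>p. dist p Q) ` S)"

definition sec_center :: "'a::metric_space set \<Rightarrow> 'a \<Rightarrow> bool" where
  "sec_center S Q \<longleftrightarrow> (\<forall>Q'. enc_radius S Q \<le> enc_radius S Q')"

definition sec_radius :: "'a::metric_space set \<Rightarrow> real" where
  "sec_radius S = (INF Q. enc_radius S Q)"

end

theory Submission
  imports Defs
begin

text \<open>Projections onto affine hulls of subsets preserve equidistance, so \<open>Q2\<close> is the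
  midpoint of \<open>P 3\<close> and \<open>P 4\<close>. The power \<open>p X = (X - P 3) \<bullet> (X - P 4)\<close> is \<open>\<le> 0\<close>
  exactly on the ball with diameter \<open>[P 3, P 4]\<close>, and that ball is the smallest enclosing one
  as soon as it contains \<open>P 1\<close> and \<open>P 2\<close>. Since \<open>X \<mapsto> p X - \<parallel>X - C\<parallel>\<^sup>2\<close> is affine,
  evaluating at a point \<open>C\<close> equidistant (radius \<open>r\<close>) from the points with nonzero
  barycentric weight gives \<open>\<Sum> \<lambda>\<^sub>i p (P i) = p C + r\<^sup>2 \<ge> 0\<close>. At \<open>Q1\<close>, which has
  \<open>\<lambda>\<^sup>1\<^sub>1 = 0\<close> by general position, this reads \<open>\<lambda>\<^sup>1\<^sub>2 p (P 2) \<ge> 0\<close>, so \<open>p (P 2) \<le> 0\<close>;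
  at \<open>Q0\<close> it then yields \<open>p (P 1) \<le> 0\<close>.\<close>

lemma atLeastAtMost_1_4: "{1..4::nat} = {1, 2, 3, 4}"
  by auto

lemma orth_proj_pythagoras:
  assumes "is_orth_proj y L x" "p \<in> L"
  shows "(dist p x)\<^sup>2 = (dist p y)\<^sup>2 + (dist x y)\<^sup>2"
proof -
  have "inner (x - y) (p - y) = 0"
    using assms unfolding is_orth_proj_def by blast
  moreover have "p - x = (p - y) - (x - y)" by simp
  ultimately show ?thesis
    by (simp add: dist_norm power2_norm_eq_inner inner_diff_left inner_diff_right inner_commute)
qed

lemma orth_proj_equidistant:
  assumes "is_orth_proj y L x" "p \<in> L" "q \<in> L" "dist p x = dist q x"
  shows "dist p y = dist q y"
  using orth_proj_pythagoras[OF assms(1,2)] orth_proj_pythagoras[OF assms(1,3)] assms(4)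
  by simp

lemma equidistant_in_affine_hull_2_imp_midpoint:
  fixes a b c :: "'a::real_normed_vector"
  assumes "c \<in> affine hull {a, b}" "dist a c = dist b c"
  shows "c = midpoint a b"
proof (cases "a = b")
  case True
  then show ?thesis using assms(1) by (simp add: hull_same)
next
  case False
  have "collinear {a, c, b}"
    using affine_hull_3_imp_collinear[OF assms(1)] by (simp add: insert_commute)
  then show ?thesis
    using midpoint_collinear[OF False] assms(2) by (simp add: dist_commute)
qed

lemma inner_diff_diff_eq_dist_midpoint:
  fixes x a b :: "'a::real_inner"
  shows "inner (x - a) (x - b) = (dist x (midpoint a b))\<^sup>2 - (dist a b / 2)\<^sup>2"
  by (simp add: dist_norm midpoint_def power2_norm_eq_inner inner_diff_left
      inner_diff_right inner_add_left inner_add_right inner_commute field_simps)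

lemma inner_diff_diff_le_0_iff_dist_midpoint:
  fixes x a b :: "'a::real_inner"
  shows "inner (x - a) (x - b) \<le> 0 \<longleftrightarrow> dist x (midpoint a b) \<le> dist a b / 2"
  unfolding inner_diff_diff_eq_dist_midpoint by (simp add: power2_le_iff_abs_le)

lemma inner_diff_diff_sub_dist_affine_comb:
  fixes P :: "'i \<Rightarrow> 'a::real_inner"
  assumes "finite I" "sum l I = 1" "y = (\<Sum>i\<in>I. l i *\<^sub>R P i)"
  shows "inner (y - a) (y - b) - (dist y c)\<^sup>2
       = (\<Sum>i\<in>I. l i * (inner (P i - a) (P i - b) - (dist (P i) c)\<^sup>2))"
proof -
  define w where "w = 2 *\<^sub>R c - a - b"
  define k where "k = inner a b - inner c c"
  have affine: "inner (x - a) (x - b) - (dist x c)\<^sup>2 = inner x w + k" for x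
    unfolding w_def k_def dist_norm
    by (simp add: power2_norm_eq_inner inner_commute algebra_simps)
  have "(\<Sum>i\<in>I. l i * (inner (P i) w + k)) = inner y w + k"
    using assms by (simp add: distrib_left sum.distrib flip: sum_distrib_right)
      (simp add: inner_sum_left)
  then show ?thesis by (simp add: affine)
qed

lemma barycentric_inner_diff_diff_nonneg:
  fixes P :: "nat \<Rightarrow> 'a::real_inner"
  assumes "is_barycentric P m c l"
    and "\<forall>i\<in>{1..m}. l i \<noteq> 0 \<longrightarrow> dist (P i) c = r" "dist a c = r" "dist b c = r"
  shows "0 \<le> (\<Sum>i=1..m. l i * inner (P i - a) (P i - b))"
proof -
  have sum_l: "sum l {1..m} = 1" and c: "c = (\<Sum>i=1..m. l i *\<^sub>R P i)"
    using assms(1) unfolding is_barycentric_def by blast+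
  have "(\<Sum>i=1..m. l i * (dist (P i) c)\<^sup>2) = (\<Sum>i=1..m. l i * r\<^sup>2)"
    using assms(2) by (intro sum.cong) auto
  then have "(\<Sum>i=1..m. l i * inner (P i - a) (P i - b)) = inner (c - a) (c - b) + r\<^sup>2"
    using inner_diff_diff_sub_dist_affine_comb[OF finite_atLeastAtMost sum_l c, of a b c] sum_l
    by (simp add: right_diff_distrib sum_subtractf flip: sum_distrib_right)
  also have "\<dots> = (norm ((c - a) + (c - b)))\<^sup>2 / 2"
  proof -
    have "r\<^sup>2 = inner (c - a) (c - a)" "r\<^sup>2 = inner (c - b) (c - b)"
      using assms(3,4) by (simp_all add: dist_norm norm_minus_commute flip: power2_norm_eq_inner)
    then show ?thesis
      by (simp add: power2_norm_eq_inner inner_add_left inner_add_right inner_commute)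
  qed
  finally show ?thesis by (metis zero_le_power2 divide_nonneg_pos zero_less_numeral)
qed

lemma barycentric_negative_weight_inner_diff_diff_nonpos:
  fixes P :: "nat \<Rightarrow> 'a::real_inner"
  assumes "is_barycentric P m c l"
    and "\<forall>i\<in>{1..m}. l i \<noteq> 0 \<longrightarrow> dist (P i) c = r" "dist a c = r" "dist b c = r"
    and "j \<in> {1..m}" "l j < 0" "\<forall>i\<in>{1..m} - {j}. l i * inner (P i - a) (P i - b) \<le> 0"
  shows "inner (P j - a) (P j - b) \<le> 0"
proof -
  have "0 \<le> (\<Sum>i=1..m. l i * inner (P i - a) (P i - b))"
    using barycentric_inner_diff_diff_nonneg[OF assms(1-4)] .
  also have "\<dots> = l j * inner (P j - a) (P j - b) + (\<Sum>i\<in>{1..m} - {j}. l i * inner (P i - a) (P i - b))"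
    using assms(5) by (simp add: sum.remove)
  also have "\<dots> \<le> l j * inner (P j - a) (P j - b)"
    using sum_nonpos[of "{1..m} - {j}" "\<lambda>i. l i * inner (P i - a) (P i - b)"] assms(7)
    by (simp add: Ball_def)
  finally show ?thesis
    using assms(6) by (simp add: zero_le_mult_iff)
qed

lemma barycentric_unique:
  assumes "general_position P m" "is_barycentric P m Q l" "is_barycentric P m Q l'"
    and "i \<in> {1..m}"
  shows "l i = l' i"
proof -
  define d where "d j = l j - l' j" for j
  have split: "{1..m} = insert 1 {2..m}"
    using assms(4) by auto
  have "(\<Sum>j=1..m. d j) = 0" "(\<Sum>j=1..m. d j *\<^sub>R P j) = 0"
    using assms(2,3) unfolding is_barycentric_def d_def
    by (simp_all add: sum_subtractf scaleR_left_diff_distrib)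
  then have sum_d: "d 1 + (\<Sum>j=2..m. d j) = 0"
    and comb_d: "d 1 *\<^sub>R P 1 + (\<Sum>j=2..m. d j *\<^sub>R P j) = 0"
    unfolding split by simp_all
  have "(\<Sum>j=2..m. d j *\<^sub>R (P j - P 1)) = (\<Sum>j=2..m. d j *\<^sub>R P j) - (\<Sum>j=2..m. d j) *\<^sub>R P 1"
    by (simp add: scaleR_diff_right sum_subtractf scaleR_sum_left)
  also have "\<dots> = 0"
    using sum_d comb_d
    by (metis add.commute add_diff_cancel_right' diff_0 minus_diff_eq scaleR_minus_left eq_neg_iff_add_eq_0)
  finally have "\<forall>j\<in>{2..m}. d j = 0"
    using assms(1) unfolding general_position_def by blast
  with sum_d have "\<forall>j\<in>{1..m}. d j = 0"
    unfolding split by simp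
  then show ?thesis using assms(4) unfolding d_def by auto
qed

lemma barycentric_zero_off_facet:
  assumes "general_position P 4" "is_barycentric P 4 Q l"
    and "Q \<in> affine hull {P 2, P 3, P 4}"
  shows "l 1 = 0"
proof -
  obtain u v w where "Q = u *\<^sub>R P 2 + v *\<^sub>R P 3 + w *\<^sub>R P 4" "u + v + w = 1"
    using assms(3) unfolding affine_hull_3 by auto
  then have "is_barycentric P 4 Q (\<lambda>i. if i = 2 then u else if i = 3 then v else if i = 4 then w else 0)"
    unfolding is_barycentric_def atLeastAtMost_1_4 by (simp add: add.assoc)
  from barycentric_unique[OF assms(1,2) this, of 1] show ?thesis by simp
qed

lemma dist_le_half_imp_midpoint:
  fixes a b q :: "'a::real_inner"
  assumes "dist a q \<le> dist a b / 2" "dist b q \<le> dist a b / 2"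
  shows "q = midpoint a b"
proof -
  have "(dist a q)\<^sup>2 + (dist b q)\<^sup>2 = 2 * (dist q (midpoint a b))\<^sup>2 + 2 * (dist a b / 2)\<^sup>2"
    by (simp add: dist_norm midpoint_def power2_norm_eq_inner inner_diff_left
        inner_diff_right inner_add_left inner_add_right inner_commute field_simps)
  moreover have "(dist a q)\<^sup>2 \<le> (dist a b / 2)\<^sup>2" "(dist b q)\<^sup>2 \<le> (dist a b / 2)\<^sup>2"
    using assms by (simp_all add: power_mono)
  ultimately have "(dist q (midpoint a b))\<^sup>2 \<le> 0" by linarith
  then show ?thesis by simp
qed

lemma enc_radius_ge:
  "finite S \<Longrightarrow> p \<in> S \<Longrightarrow> dist p q \<le> enc_radius S q"
  unfolding enc_radius_def by (auto intro: Max_ge)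

lemma half_dist_le_enc_radius:
  assumes "finite S" "a \<in> S" "b \<in> S"
  shows "dist a b / 2 \<le> enc_radius S q"
  using dist_triangle2[of a b q] enc_radius_ge[OF assms(1,2), of q] enc_radius_ge[OF assms(1,3), of q]
  by linarith

lemma smallest_enclosing_ball_diametral:
  fixes S :: "'a::real_inner set"
  assumes "finite S" "a \<in> S" "b \<in> S" "\<forall>p\<in>S. inner (p - a) (p - b) \<le> 0"
  shows "(\<forall>q. sec_center S q \<longleftrightarrow> q = midpoint a b) \<and> sec_radius S = dist a b / 2"
proof -
  have lower: "dist a b / 2 \<le> enc_radius S q" for q
    using half_dist_le_enc_radius[OF assms(1-3)] .
  have "enc_radius S (midpoint a b) \<le> dist a b / 2"
    using assms unfolding enc_radius_def inner_diff_diff_le_0_iff_dist_midpoint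
    by (subst Max_le_iff) auto
  with lower have enc_mid: "enc_radius S (midpoint a b) = dist a b / 2"
    by (simp add: antisym)
  have "sec_center S q \<longleftrightarrow> q = midpoint a b" for q
  proof
    assume "sec_center S q"
    then have "enc_radius S q \<le> dist a b / 2"
      using enc_mid unfolding sec_center_def by metis
    then show "q = midpoint a b"
      using enc_radius_ge[OF assms(1,2), of q] enc_radius_ge[OF assms(1,3), of q]
      by (intro dist_le_half_imp_midpoint) linarith+
  next
    assume "q = midpoint a b"
    then show "sec_center S q"
      unfolding sec_center_def using enc_mid lower by metis
  qed
  moreover have "sec_radius S = dist a b / 2"
    unfolding sec_radius_def
  proof (rule antisym)
    show "(INF q. enc_radius S q) \<le> dist a b / 2"
      using enc_mid lower by (metis bdd_belowI2 cINF_lower UNIV_I)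
    show "dist a b / 2 \<le> (INF q. enc_radius S q)"
      using lower by (rule cINF_greatest[OF UNIV_not_empty])
  qed
  ultimately show ?thesis by blast
qed

theorem theorem8:
  fixes P :: "nat \<Rightarrow> 'a::euclidean_space"
    and Q0 Q1 Q2 :: 'a and lam0 lam1 :: "nat \<Rightarrow> real"
  assumes gp: "general_position P 4"
    and Q0_aff: "Q0 \<in> affine hull (P ` {1..4})"
    and Q0_eq: "\<forall>i\<in>{1..4}. \<forall>j\<in>{1..4}. dist (P i) Q0 = dist (P j) Q0"
    and lam0: "is_barycentric P 4 Q0 lam0"
    and lam0_sgn: "lam0 1 < 0" "lam0 2 \<ge> 0" "lam0 3 \<ge> 0" "lam0 4 \<ge> 0"
    and Q1: "is_orth_proj Q1 (affine hull {P 2, P 3, P 4}) Q0"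
    and lam1: "is_barycentric P 4 Q1 lam1"
    and lam1_sgn: "lam1 2 < 0" "lam1 3 \<ge> 0" "lam1 4 \<ge> 0"
    and Q2: "is_orth_proj Q2 (affine hull {P 3, P 4}) Q1"
  shows "(\<forall>Q. sec_center (P ` {1..4}) Q \<longleftrightarrow> Q = Q2)
         \<and> sec_radius (P ` {1..4}) = dist (P 3) Q2"
proof -
  define pow where "pow X = inner (X - P 3) (X - P 4)" for X
  \<comment> \<open>Naming the radii keeps the equidistance facts from looping in the simplifier.\<close>
  define r0 where "r0 = dist (P 3) Q0"
  define r1 where "r1 = dist (P 3) Q1"
  have dist_Q0: "dist (P i) Q0 = r0" if "i \<in> {1..4}" for i
    using Q0_eq that unfolding r0_def atLeastAtMost_1_4 by blast
  have dist_Q1: "dist (P i) Q1 = r1" if "i \<in> {2, 3, 4}" for i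
    using that dist_Q0 unfolding r1_def atLeastAtMost_1_4
    by (intro orth_proj_equidistant[OF Q1]) (auto intro: hull_inc)
  have lam1_1: "lam1 1 = 0"
    using barycentric_zero_off_facet[OF gp lam1] Q1 unfolding is_orth_proj_def by blast
  have pow2: "pow (P 2) \<le> 0"
    unfolding pow_def
  proof (rule barycentric_negative_weight_inner_diff_diff_nonpos[OF lam1, where r = r1])
    show "\<forall>i\<in>{1..4}. lam1 i \<noteq> 0 \<longrightarrow> dist (P i) Q1 = r1"
      using dist_Q1 lam1_1 unfolding atLeastAtMost_1_4 by auto
    show "\<forall>i\<in>{1..4} - {2}. lam1 i * inner (P i - P 3) (P i - P 4) \<le> 0"
      using lam1_1 unfolding atLeastAtMost_1_4 by auto
  qed (use dist_Q1 lam1_sgn(1) in auto)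
  have pow1: "pow (P 1) \<le> 0"
    unfolding pow_def
  proof (rule barycentric_negative_weight_inner_diff_diff_nonpos[OF lam0, where r = r0])
    show "\<forall>i\<in>{1..4}. lam0 i \<noteq> 0 \<longrightarrow> dist (P i) Q0 = r0"
      using dist_Q0 by blast
    show "\<forall>i\<in>{1..4} - {1}. lam0 i * inner (P i - P 3) (P i - P 4) \<le> 0"
      using pow2 lam0_sgn(2) unfolding atLeastAtMost_1_4 pow_def by (auto simp: mult_nonneg_nonpos)
  qed (use dist_Q0 lam0_sgn(1) in auto)
  have Q2_mid: "Q2 = midpoint (P 3) (P 4)"
    using Q2 dist_Q1 unfolding is_orth_proj_def
    by (intro equidistant_in_affine_hull_2_imp_midpoint orth_proj_equidistant[OF Q2])
      (auto intro: hull_inc)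
  have "\<forall>p\<in>P ` {1..4}. pow p \<le> 0"
    using pow1 pow2 unfolding atLeastAtMost_1_4 by (auto simp: pow_def)
  from smallest_enclosing_ball_diametral[OF _ _ _ this[unfolded pow_def]]
  show ?thesis by (simp add: Q2_mid dist_midpoint)
qed

end
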